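(* Let $G$ be a finite simple graph, let $\alpha=\alpha(G)$, for $1\le j\le\alpha$ let $g_j$ be the number of independent sets of $G$ of cardinality $j$, and let $g=\sum_{j=1}^{\alpha}(-1)^{j-1}g_j$. Then $\deg h_{R/I(G)}(t)=\alpha(G)$ if and only if $g\neq 1$.
   Context: An independent set of $G$ is a set of vertices no two of which are adjacent; $\alpha(G)$ is the maximum size of an independent set. For $G$ on vertices $x_1,\dots,x_n$, $R=k[x_1,\dots,x_n]$ over a field $k$, $I(G)=(x_ix_j:\{x_i,x_j\}\in E(G))$, and $h_{R/I(G)}(t)$ is the numerator of the Hilbert series $\sum_i\dim_k(R/I(G))_it^i$ written as a reduced fraction $h_{R/I(G)}(t)/(1-t)^{\dim R/I(G)}$. *)

theory Defs
  imports "HOL-Library.Poly_Mapping" "HOL-Computational_Algebra.Computational_Algebra"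
begin

definition simple_graph :: "'v set \<Rightarrow> 'v set set \<Rightarrow> bool" where
  "simple_graph V E \<longleftrightarrow> finite V \<and> (\<forall>e\<in>E. \<exists>u v. u \<noteq> v \<and> u \<in> V \<and> v \<in> V \<and> e = {u, v})"

definition independent_set :: "'v set \<Rightarrow> 'v set set \<Rightarrow> 'v set \<Rightarrow> bool" where
  "independent_set V E S \<longleftrightarrow> S \<subseteq> V \<and> (\<forall>u\<in>S. \<forall>v\<in>S. {u, v} \<notin> E)"

definition indep_number :: "'v set \<Rightarrow> 'v set set \<Rightarrow> nat" where
  "indep_number V E = Max {card S | S. independent_set V E S}"

definition num_indep :: "'v set \<Rightarrow> 'v set set \<Rightarrow> nat \<Rightarrow> nat" where
  "num_indep V E j = card {S. independent_set V E S \<and> card S = j}"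

(* Polynomials in the variables 'v over a field 'k: monomials are exponent vectors 'v \<Rightarrow>\<^sub>0 nat *)
type_synonym ('v, 'k) mpoly = "('v \<Rightarrow>\<^sub>0 nat) \<Rightarrow>\<^sub>0 'k"

definition mvar :: "'v \<Rightarrow> ('v, 'k::field) mpoly" where
  "mvar v = Poly_Mapping.single (Poly_Mapping.single v 1) 1"

definition kscale :: "'k::field \<Rightarrow> ('v, 'k) mpoly \<Rightarrow> ('v, 'k) mpoly" where
  "kscale c p = Poly_Mapping.map (\<lambda>a. c * a) p"

definition mon_deg :: "('v \<Rightarrow>\<^sub>0 nat) \<Rightarrow> nat" where
  "mon_deg m = (\<Sum>v\<in>Poly_Mapping.keys m. Poly_Mapping.lookup m v)"

definition graded_part :: "'v set \<Rightarrow> nat \<Rightarrow> ('v, 'k::field) mpoly set" where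
  "graded_part V i = {p. \<forall>m\<in>Poly_Mapping.keys p. Poly_Mapping.keys m \<subseteq> V \<and> mon_deg m = i}"

(* the edge ideal I(G) = (x_u x_v : {u,v} \<in> E), ideal generated in the polynomial ring *)
definition edge_ideal :: "'v set set \<Rightarrow> ('v, 'k::field) mpoly set" where
  "edge_ideal E = module.span (*) {mvar u * mvar v | u v. {u, v} \<in> E}"

(* dim_k (R/I(G))_i = dim_k R_i - dim_k (I(G) \<inter> R_i) *)
definition hilbert_fun :: "'k::field itself \<Rightarrow> 'v set \<Rightarrow> 'v set set \<Rightarrow> nat \<Rightarrow> nat" where
  "hilbert_fun _ V E i =
     vector_space.dim (kscale :: 'k \<Rightarrow> _) (graded_part V i)
     - vector_space.dim (kscale :: 'k \<Rightarrow> _) (graded_part V i \<inter> edge_ideal E)"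

definition hilbert_series :: "'k::field itself \<Rightarrow> 'v set \<Rightarrow> 'v set set \<Rightarrow> int fps" where
  "hilbert_series K V E = Abs_fps (\<lambda>i. int (hilbert_fun K V E i))"

definition hilbert_numerator :: "'k::field itself \<Rightarrow> 'v set \<Rightarrow> 'v set set \<Rightarrow> int poly" where
  "hilbert_numerator K V E =
     (THE h. \<exists>d::nat. fps_of_poly h = hilbert_series K V E * (1 - fps_X) ^ d
                     \<and> coprime h ([:1, -1:] ^ d))"

end

theory Submission
  imports Defs
begin

text \<open>
  A polynomial lies in the edge ideal iff each of its monomials is divisible by some
  x_u x_v with {u, v} an edge, so the monomials surviving in R/I(G) are exactly those
  whose support is an independent set. The monomials with support exactly S have
  generating function t^|S| / (1 - t)^|S|; hence multiplying the Hilbert series by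
  (1 - t)^\<alpha> gives the polynomial h(t) = \<Sum>_S t^|S| (1 - t)^(\<alpha> - |S|), summed over
  all independent sets S. Since h(1), the number of independent sets of size \<alpha>, is
  positive, h is coprime to 1 - t and is therefore the reduced numerator. Its
  coefficient of t^\<alpha> is \<Sum>_S (-1)^(\<alpha> - |S|) = (-1)^\<alpha> (1 - g), which vanishes iff g = 1.
\<close>

abbreviation keys :: "('a \<Rightarrow>\<^sub>0 'b::zero) \<Rightarrow> 'a set" where
  "keys \<equiv> Poly_Mapping.keys"

abbreviation lookup :: "('a \<Rightarrow>\<^sub>0 'b::zero) \<Rightarrow> 'a \<Rightarrow> 'b" where
  "lookup \<equiv> Poly_Mapping.lookup"

abbreviation single :: "'a \<Rightarrow> 'b::zero \<Rightarrow> 'a \<Rightarrow>\<^sub>0 'b" where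
  "single \<equiv> Poly_Mapping.single"

section \<open>Polynomials and monomials\<close>

lemma single_one_eq_iff: "single k (1::'a::zero_neq_one) = single l 1 \<longleftrightarrow> k = l"
  by (metis lookup_single_eq lookup_single_not_eq zero_neq_one)

lemma lookup_kscale [simp]: "lookup (kscale c p) m = c * lookup p m"
  unfolding kscale_def by transfer (simp add: when_def)

lemma vector_space_kscale: "vector_space (kscale :: 'k::field \<Rightarrow> ('v, 'k) mpoly \<Rightarrow> _)"
  by unfold_locales (simp_all add: poly_mapping_eq_iff fun_eq_iff lookup_add algebra_simps)

lemma poly_mapping_eq_sum_single: "p = (\<Sum>m\<in>keys p. single m (lookup p m))"
  by (rule poly_mapping_eqI) (auto simp: lookup_sum lookup_single when_def in_keys_iff)

lemma dim_polys_with_keys_in: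
  assumes "finite M"
  shows "vector_space.dim (kscale :: 'k::field \<Rightarrow> _) {p :: ('v, 'k) mpoly. keys p \<subseteq> M} = card M"
proof -
  interpret vs: vector_space "kscale :: 'k \<Rightarrow> ('v, 'k) mpoly \<Rightarrow> _" by (rule vector_space_kscale)
  let ?B = "(\<lambda>m. single m (1::'k)) ` M"
  have sub: "?B \<subseteq> {p. keys p \<subseteq> M}" by auto
  have span: "{p. keys p \<subseteq> M} \<subseteq> vs.span ?B"
  proof
    fix p :: "('v, 'k) mpoly" assume "p \<in> {p. keys p \<subseteq> M}"
    have "p = (\<Sum>m\<in>keys p. kscale (lookup p m) (single m 1))"
      by (subst poly_mapping_eq_sum_single) (simp add: kscale_def)
    also have "\<dots> \<in> vs.span ?B"
      using \<open>p \<in> _\<close> by (intro vs.span_sum vs.span_scale vs.span_base) auto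
    finally show "p \<in> vs.span ?B" .
  qed
  have indep: "vs.independent ?B"
    unfolding vs.independent_explicit_module
  proof (intro allI impI)
    fix t u and b :: "('v, 'k) mpoly"
    assume t: "finite t" "t \<subseteq> ?B" "(\<Sum>w\<in>t. kscale (u w) w) = 0" and "b \<in> t"
    then obtain m where b: "b = single m 1" by auto
    have "u w * lookup w m = (if w = b then u w else 0)" if w: "w \<in> t" for w
    proof -
      obtain m' where "w = single m' 1" using w t(2) by auto
      then show ?thesis using b by (auto simp: lookup_single when_def single_one_eq_iff)
    qed
    then have "0 = (\<Sum>w\<in>t. if w = b then u w else 0)"
      using arg_cong[OF t(3), of "\<lambda>p. lookup p m"] by (simp add: lookup_sum cong: sum.cong)
    then show "u b = 0" using t(1) \<open>b \<in> t\<close> by simp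
  qed
  have "card ?B = card M"
    by (rule card_image) (auto simp: inj_on_def single_one_eq_iff)
  then show ?thesis
    using vs.basis_card_eq_dim[OF sub span indep] by simp
qed

definition monomials :: "'v set \<Rightarrow> nat \<Rightarrow> ('v \<Rightarrow>\<^sub>0 nat) set" where
  "monomials V i = {m. keys m \<subseteq> V \<and> mon_deg m = i}"

lemma graded_part_eq: "graded_part V i = {p. keys p \<subseteq> monomials V i}"
  by (auto simp: graded_part_def monomials_def)

lemma keys_add_nat: "keys (a + b :: 'v \<Rightarrow>\<^sub>0 nat) = keys a \<union> keys b"
  by (auto simp: in_keys_iff lookup_add)

lemma mon_deg_add: "mon_deg (a + b) = mon_deg a + mon_deg b"
  unfolding mon_deg_def by (rule setsum_keys_plus_distrib) simp_all

lemma mon_deg_single: "mon_deg (single v k) = k"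
  by (simp add: mon_deg_def)

lemma lookup_le_mon_deg: "lookup m v \<le> mon_deg m"
  by (cases "v \<in> keys m") (auto simp: mon_deg_def in_keys_iff intro: member_le_sum)

lemma finite_monomials:
  assumes "finite V"
  shows "finite (monomials V i)"
proof -
  let ?F = "{f. \<forall>x. (x \<in> V \<longrightarrow> f x \<in> {0..i}) \<and> (x \<notin> V \<longrightarrow> f x = (0::nat))}"
  have "lookup ` monomials V i \<subseteq> ?F"
  proof (rule image_subsetI, unfold mem_Collect_eq, intro allI conjI impI)
    fix m x assume m: "m \<in> monomials V i"
    show "lookup m x \<in> {0..i}" using lookup_le_mon_deg[of m x] m by (simp add: monomials_def)
    show "lookup m x = 0" if "x \<notin> V" using m that by (auto simp: monomials_def in_keys_iff)
  qed
  moreover have "finite ?F"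
    using assms by (intro finite_set_of_finite_funs) auto
  ultimately have "finite (lookup ` monomials V i)" by (rule finite_subset)
  moreover have "inj_on lookup (monomials V i)"
    by (rule inj_onI) (simp add: poly_mapping_eqI)
  ultimately show ?thesis by (rule finite_imageD)
qed

section \<open>The edge ideal\<close>

lemma module_mult_self: "module ((*) :: 'a::comm_ring_1 \<Rightarrow> 'a \<Rightarrow> 'a)"
  by unfold_locales (auto simp: algebra_simps)

lemma mvar_mult_mvar: "mvar u * mvar v = single (single u 1 + single v 1) 1"
  by (simp add: mvar_def mult_single)

lemma edge_in_keys_if_in_edge_ideal:
  assumes "p \<in> edge_ideal E" and "m \<in> keys p"
  shows "\<exists>e\<in>E. e \<subseteq> keys m"
proof -
  interpret ring_module: module "(*) :: ('v, 'k::field) mpoly \<Rightarrow> _ \<Rightarrow> _"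
    by (rule module_mult_self)
  have "p \<in> ring_module.span {mvar u * mvar v | u v. {u, v} \<in> E}"
    using assms(1) by (simp add: edge_ideal_def)
  then show ?thesis using assms(2)
  proof (induction arbitrary: m rule: ring_module.span_induct_alt)
    case (step c x y)
    then obtain u v where x: "x = mvar u * mvar v" "{u, v} \<in> E" by auto
    show ?case
    proof (cases "m \<in> keys (c * x)")
      case True
      then obtain a where "m = a + (single u 1 + single v 1)"
        using keys_mult[of c x] by (auto simp: x mvar_mult_mvar split: if_splits)
      then show ?thesis using x(2) by (intro bexI[of _ "{u, v}"]) (auto simp: keys_add_nat)
    next
      case False
      then show ?thesis using step keys_add[of "c * x" y] by auto
    qed
  qed simp
qed

lemma in_edge_ideal_if_edge_in_keys:
  assumes E: "\<forall>e\<in>E. card e = 2" and p: "\<forall>m\<in>keys p. \<exists>e\<in>E. e \<subseteq> keys m"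
  shows "(p :: ('v, 'k::field) mpoly) \<in> edge_ideal E"
proof -
  interpret ring_module: module "(*) :: ('v, 'k) mpoly \<Rightarrow> _ \<Rightarrow> _"
    by (rule module_mult_self)
  let ?G = "{mvar u * mvar v | u v. {u, v} \<in> E} :: ('v, 'k) mpoly set"
  have "single m (lookup p m) \<in> ring_module.span ?G" if m: "m \<in> keys p" for m
  proof -
    obtain e where e: "e \<in> E" "e \<subseteq> keys m" using p m by blast
    moreover obtain u v where "e = {u, v}" "u \<noteq> v" using E e(1) card_2_iff[of e] by auto
    ultimately have uv: "u \<noteq> v" "{u, v} \<in> E" "{u, v} \<subseteq> keys m" by simp_all
    let ?uv = "single u 1 + single v (1::nat)"
    have "m = (m - ?uv) + ?uv"
      using uv by (auto simp: poly_mapping_eq_iff fun_eq_iff lookup_add lookup_minus lookup_single when_def in_keys_iff)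
    then have "single m (lookup p m) = single (m - ?uv) (lookup p m) * (mvar u * mvar v)"
      by (simp add: mvar_mult_mvar mult_single)
    also have "\<dots> \<in> ring_module.span ?G"
      by (rule ring_module.span_scale, rule ring_module.span_base) (use uv in blast)
    finally show ?thesis .
  qed
  then have "(\<Sum>m\<in>keys p. single m (lookup p m)) \<in> ring_module.span ?G"
    by (intro ring_module.span_sum)
  then show ?thesis using poly_mapping_eq_sum_single[of p] by (simp add: edge_ideal_def)
qed

lemma in_edge_ideal_iff:
  assumes "\<forall>e\<in>E. card e = 2"
  shows "(p :: ('v, 'k::field) mpoly) \<in> edge_ideal E \<longleftrightarrow> (\<forall>m\<in>keys p. \<exists>e\<in>E. e \<subseteq> keys m)"
  using edge_in_keys_if_in_edge_ideal in_edge_ideal_if_edge_in_keys[OF assms] by blast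

lemma graded_part_Int_edge_ideal:
  assumes "\<forall>e\<in>E. card e = 2"
  shows "graded_part V i \<inter> edge_ideal E
    = {p :: ('v, 'k::field) mpoly. keys p \<subseteq> {m \<in> monomials V i. \<exists>e\<in>E. e \<subseteq> keys m}}"
  by (auto simp: graded_part_eq in_edge_ideal_iff[OF assms])

lemma card_edge_if_simple_graph: "simple_graph V E \<Longrightarrow> \<forall>e\<in>E. card e = 2"
  unfolding simple_graph_def card_2_iff by blast

lemma independent_set_iff_no_edge_inside:
  assumes "\<forall>e\<in>E. card e = 2"
  shows "independent_set V E S \<longleftrightarrow> S \<subseteq> V \<and> (\<forall>e\<in>E. \<not> e \<subseteq> S)"
proof -
  have "(\<forall>u\<in>S. \<forall>v\<in>S. {u, v} \<notin> E) \<longleftrightarrow> (\<forall>e\<in>E. \<not> e \<subseteq> S)"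
  proof
    assume no_edge: "\<forall>u\<in>S. \<forall>v\<in>S. {u, v} \<notin> E"
    show "\<forall>e\<in>E. \<not> e \<subseteq> S"
    proof (intro ballI notI)
      fix e assume e: "e \<in> E" "e \<subseteq> S"
      moreover obtain u v where "e = {u, v}" using assms e(1) card_2_iff[of e] by auto
      ultimately show False using no_edge by auto
    qed
  next
    assume "\<forall>e\<in>E. \<not> e \<subseteq> S"
    then show "\<forall>u\<in>S. \<forall>v\<in>S. {u, v} \<notin> E" by auto
  qed
  then show ?thesis by (simp add: independent_set_def)
qed

lemma hilbert_fun_eq_card_independent:
  assumes G: "simple_graph V E"
  shows "hilbert_fun TYPE('k::field) V E i = card {m \<in> monomials V i. independent_set V E (keys m)}"
proof -
  have E: "\<forall>e\<in>E. card e = 2" using G by (rule card_edge_if_simple_graph)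
  have fin: "finite (monomials V i)" using G by (simp add: simple_graph_def finite_monomials)
  let ?D = "{m \<in> monomials V i. \<exists>e\<in>E. e \<subseteq> keys m}"
  have "hilbert_fun TYPE('k) V E i = card (monomials V i) - card ?D"
    unfolding hilbert_fun_def graded_part_Int_edge_ideal[OF E] unfolding graded_part_eq
    using fin by (simp add: dim_polys_with_keys_in)
  also have "\<dots> = card (monomials V i - ?D)"
    using fin by (simp add: card_Diff_subset finite_subset)
  also have "monomials V i - ?D = {m \<in> monomials V i. independent_set V E (keys m)}"
    by (auto simp: independent_set_iff_no_edge_inside[OF E] monomials_def)
  finally show ?thesis .
qed

section \<open>Monomials with prescribed support\<close>

definition monomials_with_support :: "'v set \<Rightarrow> nat \<Rightarrow> ('v \<Rightarrow>\<^sub>0 nat) set" where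
  "monomials_with_support S i = {m. keys m = S \<and> mon_deg m = i}"

lemma finite_monomials_with_support: "finite S \<Longrightarrow> finite (monomials_with_support S i)"
  by (rule finite_subset[OF _ finite_monomials[of S i]])
    (auto simp: monomials_def monomials_with_support_def)

lemma monomials_with_support_empty: "monomials_with_support {} i = (if i = 0 then {0} else {})"
  by (auto simp: monomials_with_support_def mon_deg_def)

lemma split_off_key:
  fixes m :: "'v \<Rightarrow>\<^sub>0 nat"
  shows "m = (m - single a (lookup m a)) + single a (lookup m a)"
    and "keys (m - single a (lookup m a)) = keys m - {a}"
proof -
  have lookup_rest: "lookup (m - single a (lookup m a)) x = (if x = a then 0 else lookup m x)" for x
    by (simp add: lookup_minus lookup_single when_def)
  show "m = (m - single a (lookup m a)) + single a (lookup m a)"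
    by (rule poly_mapping_eqI) (simp add: lookup_add lookup_rest lookup_single when_def)
  show "keys (m - single a (lookup m a)) = keys m - {a}"
    by (auto simp: in_keys_iff lookup_rest split: if_splits)
qed

lemma inj_on_add_single:
  assumes "a \<notin> S"
  shows "inj_on (\<lambda>(j, m). m + single a (i - j)) (Sigma {..<i} (monomials_with_support S))"
proof (rule inj_onI)
  let ?P = "Sigma {..<i} (monomials_with_support S)"
  fix x y assume "x \<in> ?P" "y \<in> ?P" and "(\<lambda>(j, m). m + single a (i - j)) x = (\<lambda>(j, m). m + single a (i - j)) y"
  moreover obtain j m j' m' where xy: "x = (j, m)" "y = (j', m')" by fastforce
  ultimately have P: "(j, m) \<in> ?P" "(j', m') \<in> ?P"
    and eq: "m + single a (i - j) = m' + single a (i - j')" by simp_all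
  then have "lookup m a = 0" "lookup m' a = 0"
    using assms by (auto simp: monomials_with_support_def in_keys_iff)
  then have "i - j = i - j'"
    using arg_cong[OF eq, of "\<lambda>m. lookup m a"] by (simp add: lookup_add)
  with P have "j = j'" by auto
  with eq show "x = y" using xy by simp
qed

lemma monomials_with_support_insert:
  assumes "a \<notin> S"
  shows "monomials_with_support (insert a S) i
    = (\<lambda>(j, m). m + single a (i - j)) ` Sigma {..<i} (monomials_with_support S)"
    (is "_ = ?f ` ?P")
proof
  show "?f ` ?P \<subseteq> monomials_with_support (insert a S) i"
    by (auto simp: monomials_with_support_def keys_add_nat mon_deg_add mon_deg_single)
  show "monomials_with_support (insert a S) i \<subseteq> ?f ` ?P"
  proof
    fix m assume m: "m \<in> monomials_with_support (insert a S) i"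
    let ?k = "lookup m a" and ?m' = "m - single a (lookup m a)"
    have k: "0 < ?k" "?k \<le> i"
      using m lookup_le_mon_deg[of m a] by (auto simp: monomials_with_support_def in_keys_iff)
    have "keys ?m' = S"
      using m assms split_off_key(2)[of m a] by (auto simp: monomials_with_support_def)
    moreover have "mon_deg ?m' + ?k = i"
      using m arg_cong[OF split_off_key(1)[of m a], of mon_deg]
      by (simp add: monomials_with_support_def mon_deg_add mon_deg_single)
    ultimately have "(i - ?k, ?m') \<in> ?P"
      using k by (auto simp: monomials_with_support_def)
    moreover have "?f (i - ?k, ?m') = m"
      using k split_off_key(1)[of m a] by simp
    ultimately show "m \<in> ?f ` ?P" by (rule rev_image_eqI[OF _ sym])
  qed
qed

lemma card_monomials_with_support_insert:
  assumes "finite S" "a \<notin> S"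
  shows "card (monomials_with_support (insert a S) i) = (\<Sum>j<i. card (monomials_with_support S j))"
proof -
  have "card (monomials_with_support (insert a S) i) = card (Sigma {..<i} (monomials_with_support S))"
    by (simp add: monomials_with_support_insert[OF assms(2)] card_image[OF inj_on_add_single[OF assms(2)]])
  also have "\<dots> = (\<Sum>j<i. card (monomials_with_support S j))"
    using assms(1) by (simp add: card_SigmaI finite_monomials_with_support)
  finally show ?thesis .
qed

definition support_series :: "'v set \<Rightarrow> int fps" where
  "support_series S = Abs_fps (\<lambda>i. int (card (monomials_with_support S i)))"

lemma support_series_empty: "support_series {} = 1"
  by (rule fps_ext) (simp add: support_series_def monomials_with_support_empty)

lemma support_series_insert:
  assumes "finite S" "a \<notin> S"
  shows "support_series (insert a S) * (1 - fps_X) = fps_X * support_series S"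
proof (rule fps_ext)
  fix n
  show "(support_series (insert a S) * (1 - fps_X)) $ n = (fps_X * support_series S) $ n"
    by (cases n) (simp_all add: algebra_simps support_series_def
        card_monomials_with_support_insert[OF assms])
qed

lemma support_series_mult_power:
  "finite S \<Longrightarrow> support_series S * (1 - fps_X) ^ card S = fps_X ^ card S"
proof (induction S rule: finite_induct)
  case (insert a S)
  have "support_series (insert a S) * (1 - fps_X) ^ card (insert a S)
      = (support_series (insert a S) * (1 - fps_X)) * (1 - fps_X) ^ card S"
    using insert by (simp add: algebra_simps)
  also have "\<dots> = fps_X * (support_series S * (1 - fps_X) ^ card S)"
    by (simp only: support_series_insert[OF insert(1,2)] mult.assoc)
  finally show ?case using insert by simp
qed (simp add: support_series_empty)

section \<open>Reduced numerators\<close>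

lemma reduced_fraction_unique:
  fixes h p q :: "'a::{idom, algebraic_semidom}"
  assumes eq: "h * q ^ a = p * q ^ d" and coprime: "coprime h (q ^ d)"
    and prime: "prime_elem q" and not_dvd: "\<not> q dvd p"
  shows "h = p"
proof -
  have "q \<noteq> 0" and not_unit: "\<not> is_unit q" using prime by (simp_all add: prime_elem_def)
  consider "d = a" | "a < d" | "d < a" by linarith
  then show ?thesis
  proof cases
    case 1
    then show ?thesis using eq \<open>q \<noteq> 0\<close> by simp
  next
    case 2
    then have "h * q ^ a = (p * q ^ (d - a)) * q ^ a"
      using eq by (simp add: mult.assoc flip: power_add)
    then have "h = p * q ^ (d - a)" using \<open>q \<noteq> 0\<close> by simp
    then have "q dvd h" using 2 by (simp add: dvd_power)
    moreover have "q dvd q ^ d" using 2 by (simp add: dvd_power)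
    ultimately show ?thesis using coprime not_unit coprime_common_divisor by blast
  next
    case 3
    then have "(h * q ^ (a - d)) * q ^ d = p * q ^ d"
      using eq by (simp add: mult.assoc flip: power_add)
    then have "p = h * q ^ (a - d)" using \<open>q \<noteq> 0\<close> by simp
    then have "q dvd p" using 3 by (simp add: dvd_power)
    with not_dvd show ?thesis by contradiction
  qed
qed

lemma fps_of_poly_one_minus_X: "fps_of_poly [:1, -1::int:] = 1 - fps_X"
  by (simp add: fps_of_poly_pCons fps_eq_iff)

lemma prime_elem_one_minus_X: "prime_elem [:1, -1::int:]"
  by (rule prime_elem_linear_poly) simp_all

lemma one_minus_X_dvd_iff: "[:1, -1::int:] dvd p \<longleftrightarrow> poly p 1 = 0"
proof -
  have q: "[:1, -1::int:] = - [:-1, 1:]" by simp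
  show ?thesis by (simp only: q minus_dvd_iff poly_eq_0_iff_dvd)
qed

lemma hilbert_numerator_eqI:
  assumes eq: "fps_of_poly p = hilbert_series K V E * (1 - fps_X) ^ a"
    and at_1: "poly p 1 \<noteq> 0"
  shows "hilbert_numerator K V E = p"
  unfolding hilbert_numerator_def
proof (rule the_equality)
  let ?q = "[:1, -1:] :: int poly"
  have fps_q: "fps_of_poly (?q ^ n) = (1 - fps_X) ^ n" for n
    by (simp add: fps_of_poly_power fps_of_poly_one_minus_X)
  have not_dvd: "\<not> ?q dvd p" using at_1 by (simp add: one_minus_X_dvd_iff)
  then have "coprime ?q p" by (rule prime_elem_imp_coprime[OF prime_elem_one_minus_X])
  then show "\<exists>d. fps_of_poly p = hilbert_series K V E * (1 - fps_X) ^ d \<and> coprime p (?q ^ d)"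
    using eq by (auto simp: coprime_commute)
  fix h assume "\<exists>d. fps_of_poly h = hilbert_series K V E * (1 - fps_X) ^ d \<and> coprime h (?q ^ d)"
  then obtain d where h: "fps_of_poly h = hilbert_series K V E * (1 - fps_X) ^ d"
    and coprime: "coprime h (?q ^ d)" by blast
  have "fps_of_poly (h * ?q ^ a) = fps_of_poly (p * ?q ^ d)"
    by (simp add: fps_of_poly_mult fps_q h eq ac_simps)
  then have "h * ?q ^ a = p * ?q ^ d" by (simp only: fps_of_poly_eq_iff)
  then show "h = p" using coprime prime_elem_one_minus_X not_dvd by (rule reduced_fraction_unique)
qed

lemma degree_eq_iff_coeff_nonzero:
  assumes "p \<noteq> 0" and "degree p \<le> n"
  shows "degree p = n \<longleftrightarrow> coeff p n \<noteq> 0"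
  using assms le_degree[of p n] leading_coeff_0_iff[of p] by auto

lemma coeff_monom_mult_power_one_minus_X:
  "coeff (monom 1 s * [:1, -1::int:] ^ k) (s + k) = (-1) ^ k"
proof -
  have "degree ([:1, -1::int:] ^ k) = k" by (simp add: degree_power_eq)
  then have "coeff ([:1, -1::int:] ^ k) k = lead_coeff ([:1, -1:] ^ k)" by simp
  also have "\<dots> = (-1) ^ k" by (simp add: lead_coeff_power)
  finally show ?thesis by (simp add: coeff_monom_mult)
qed

section \<open>Finite simple graphs\<close>

locale finite_simple_graph =
  fixes V :: "'v set" and E :: "'v set set"
  assumes simple_graph: "simple_graph V E"
begin

abbreviation indep_sets :: "'v set set" where
  "indep_sets \<equiv> {S. independent_set V E S}"

abbreviation \<alpha> :: nat where
  "\<alpha> \<equiv> indep_number V E"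

lemma finite_vertices: "finite V"
  using simple_graph by (simp add: simple_graph_def)

lemma finite_indep_sets: "finite indep_sets"
  by (rule finite_subset[of _ "Pow V"]) (auto simp: independent_set_def finite_vertices)

lemma finite_if_independent: "independent_set V E S \<Longrightarrow> finite S"
  using finite_vertices by (auto simp: independent_set_def intro: finite_subset)

lemma card_le_indep_number: "independent_set V E S \<Longrightarrow> card S \<le> \<alpha>"
  unfolding indep_number_def using finite_indep_sets
  by (intro Max_ge) (auto simp: setcompr_eq_image)

lemma num_indep_indep_number_pos: "num_indep V E \<alpha> > 0"
proof -
  have "\<alpha> \<in> {card S | S. independent_set V E S}"
    unfolding indep_number_def using finite_indep_sets
    by (intro Max_in) (auto simp: setcompr_eq_image independent_set_def)
  then have "{S. independent_set V E S \<and> card S = \<alpha>} \<noteq> {}" by auto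
  moreover have "finite {S. independent_set V E S \<and> card S = \<alpha>}"
    using finite_indep_sets by (rule finite_subset[rotated]) auto
  ultimately show ?thesis by (simp add: num_indep_def card_gt_0_iff)
qed

lemma num_indep_0: "num_indep V E 0 = 1"
proof -
  have "{S. independent_set V E S \<and> card S = 0} = {{}}"
    using finite_if_independent by (auto simp: independent_set_def)
  then show ?thesis by (simp add: num_indep_def)
qed

lemma hilbert_fun_eq_sum:
  "hilbert_fun TYPE('k::field) V E i = (\<Sum>S\<in>indep_sets. card (monomials_with_support S i))"
proof -
  have "{m \<in> monomials V i. independent_set V E (keys m)}
      = (\<Union>S\<in>indep_sets. monomials_with_support S i)"
    by (auto simp: monomials_def monomials_with_support_def independent_set_def)
  then have "hilbert_fun TYPE('k) V E i = card (\<Union>S\<in>indep_sets. monomials_with_support S i)"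
    by (simp add: hilbert_fun_eq_card_independent[OF simple_graph])
  also have "\<dots> = (\<Sum>S\<in>indep_sets. card (monomials_with_support S i))"
    using finite_indep_sets finite_monomials_with_support[OF finite_if_independent]
    by (intro card_UN_disjoint) (auto simp: monomials_with_support_def)
  finally show ?thesis .
qed

lemma hilbert_series_eq_sum:
  "hilbert_series TYPE('k::field) V E = (\<Sum>S\<in>indep_sets. support_series S)"
  by (rule fps_ext) (simp add: hilbert_series_def support_series_def fps_sum_nth hilbert_fun_eq_sum)

definition indep_numerator :: "int poly" where
  "indep_numerator = (\<Sum>S\<in>indep_sets. monom 1 (card S) * [:1, -1:] ^ (\<alpha> - card S))"

lemma fps_of_indep_numerator:
  "fps_of_poly indep_numerator = hilbert_series TYPE('k::field) V E * (1 - fps_X) ^ \<alpha>"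
proof -
  have "fps_of_poly indep_numerator = (\<Sum>S\<in>indep_sets. fps_X ^ card S * (1 - fps_X) ^ (\<alpha> - card S))"
    by (simp add: indep_numerator_def fps_of_poly_sum fps_of_poly_mult fps_of_poly_power
        fps_of_poly_monom' fps_of_poly_one_minus_X)
  also have "\<dots> = (\<Sum>S\<in>indep_sets. support_series S * (1 - fps_X) ^ \<alpha>)"
  proof (rule sum.cong[OF refl])
    fix S assume S: "S \<in> indep_sets"
    have "support_series S * (1 - fps_X) ^ \<alpha>
        = (support_series S * (1 - fps_X) ^ card S) * (1 - fps_X) ^ (\<alpha> - card S)"
      using card_le_indep_number S by (simp add: mult.assoc flip: power_add)
    also have "\<dots> = fps_X ^ card S * (1 - fps_X) ^ (\<alpha> - card S)"
      using S by (simp add: support_series_mult_power finite_if_independent)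
    finally show "fps_X ^ card S * (1 - fps_X) ^ (\<alpha> - card S) = support_series S * (1 - fps_X) ^ \<alpha>"
      by (rule sym)
  qed
  also have "\<dots> = hilbert_series TYPE('k) V E * (1 - fps_X) ^ \<alpha>"
    by (simp add: hilbert_series_eq_sum sum_distrib_right)
  finally show ?thesis .
qed

lemma poly_indep_numerator_1: "poly indep_numerator 1 = int (num_indep V E \<alpha>)"
proof -
  have "poly indep_numerator 1 = (\<Sum>S\<in>indep_sets. if card S = \<alpha> then 1 else 0)"
    unfolding indep_numerator_def poly_sum
    by (intro sum.cong) (auto simp: poly_monom poly_power dest: card_le_indep_number)
  also have "\<dots> = int (card (indep_sets \<inter> {S. card S = \<alpha>}))"
    using finite_indep_sets by (simp add: sum.If_cases)
  finally show ?thesis by (simp add: num_indep_def Collect_conj_eq)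
qed

lemma degree_indep_numerator_le: "degree indep_numerator \<le> \<alpha>"
  unfolding indep_numerator_def
proof (rule degree_sum_le[OF finite_indep_sets])
  fix S assume "S \<in> indep_sets"
  have "degree (monom 1 (card S) * [:1, -1::int:] ^ (\<alpha> - card S))
      \<le> degree (monom (1::int) (card S)) + degree ([:1, -1::int:] ^ (\<alpha> - card S))"
    by (rule degree_mult_le)
  also have "\<dots> = \<alpha>"
    using card_le_indep_number \<open>S \<in> indep_sets\<close> by (simp add: degree_monom_eq degree_power_eq)
  finally show "degree (monom 1 (card S) * [:1, -1::int:] ^ (\<alpha> - card S)) \<le> \<alpha>" .
qed

lemma coeff_indep_numerator: "coeff indep_numerator \<alpha> = (\<Sum>S\<in>indep_sets. (-1) ^ (\<alpha> - card S))"
  unfolding indep_numerator_def coeff_sum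
proof (rule sum.cong[OF refl])
  fix S assume "S \<in> indep_sets"
  then have "\<alpha> = card S + (\<alpha> - card S)" using card_le_indep_number by simp
  then show "coeff (monom 1 (card S) * [:1, -1::int:] ^ (\<alpha> - card S)) \<alpha> = (-1) ^ (\<alpha> - card S)"
    by (metis coeff_monom_mult_power_one_minus_X)
qed

lemma alternating_sum_indep_sets:
  "(\<Sum>S\<in>indep_sets. (-1::int) ^ (\<alpha> - card S))
    = (-1) ^ \<alpha> * (1 - (\<Sum>j=1..\<alpha>. (-1) ^ (j - 1) * int (num_indep V E j)))"
proof -
  have "(\<Sum>S\<in>indep_sets. (-1::int) ^ (\<alpha> - card S)) = (-1) ^ \<alpha> * (\<Sum>S\<in>indep_sets. (-1) ^ card S)"
    unfolding sum_distrib_left using card_le_indep_number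
    by (intro sum.cong) (simp_all flip: power_add neg_one_power_add_eq_neg_one_power_diff)
  also have "(\<Sum>S\<in>indep_sets. (-1::int) ^ card S)
      = (\<Sum>j=0..\<alpha>. \<Sum>S\<in>{S \<in> indep_sets. card S = j}. (-1) ^ card S)"
    using finite_indep_sets card_le_indep_number by (intro sum.group[symmetric]) auto
  also have "\<dots> = (\<Sum>j=0..\<alpha>. (-1) ^ j * int (num_indep V E j))"
    by (simp add: num_indep_def mult.commute)
  also have "\<dots> = 1 + (\<Sum>j=1..\<alpha>. (-1) ^ j * int (num_indep V E j))"
    by (simp add: sum.atLeast_Suc_atMost num_indep_0)
  also have "(\<Sum>j=1..\<alpha>. (-1::int) ^ j * int (num_indep V E j))
      = - (\<Sum>j=1..\<alpha>. (-1) ^ (j - 1) * int (num_indep V E j))"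
    unfolding sum_negf[symmetric] by (rule sum.cong) (auto simp: power_eq_if)
  finally show ?thesis by simp
qed

end

theorem theorem3p2:
  fixes V :: "'v set" and E :: "'v set set"
  assumes "simple_graph V E"
  shows "degree (hilbert_numerator TYPE('k::field) V E) = indep_number V E
     \<longleftrightarrow> (\<Sum>j=1..indep_number V E. (-1::int) ^ (j - 1) * int (num_indep V E j)) \<noteq> 1"
proof -
  interpret finite_simple_graph V E by unfold_locales (rule assms)
  have "poly indep_numerator 1 \<noteq> 0"
    using poly_indep_numerator_1 num_indep_indep_number_pos by simp
  then have "hilbert_numerator TYPE('k) V E = indep_numerator"
    by (intro hilbert_numerator_eqI[OF fps_of_indep_numerator])
  moreover have "indep_numerator \<noteq> 0"
    using \<open>poly indep_numerator 1 \<noteq> 0\<close> by auto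
  ultimately show ?thesis
    by (simp add: degree_eq_iff_coeff_nonzero degree_indep_numerator_le
        coeff_indep_numerator alternating_sum_indep_sets)
qed

end
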